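(* For every integer $\Delta\ge 3$ and every integer $g\ge 3$, there exists a $\Delta$-regular bipartite graph $G$ with girth at least $g$ such that $\chi'_{inj}(G)\ge \Delta$.
   Context: All graphs are finite and simple. An edge coloring of a graph $G$ (not necessarily proper) is \emph{injective} if any two distinct edges $e,f$ receive distinct colors whenever either (i) $e$ and $f$ share no vertex and some edge of $G$ joins an endpoint of $e$ to an endpoint of $f$, or (ii) $e$ and $f$ lie in a common triangle of $G$. The injective chromatic index $\chi'_{inj}(G)$ is the minimum number of colors in an injective edge coloring of $G$. *)

theory Defs
  imports Main
begin

definition simple_graph :: "'a set \<Rightarrow> ('a \<Rightarrow> 'a \<Rightarrow> bool) \<Rightarrow> bool" where
  "simple_graph V E \<longleftrightarrow> finite V \<and> (\<forall>u v. E u v \<longrightarrow> u \<in> V \<and> v \<in> V)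
     \<and> (\<forall>u v. E u v \<longrightarrow> E v u) \<and> (\<forall>v. \<not> E v v)"

definition edges :: "('a \<Rightarrow> 'a \<Rightarrow> bool) \<Rightarrow> 'a set set" where
  "edges E = {{u, v} | u v. E u v}"

definition degree :: "'a set \<Rightarrow> ('a \<Rightarrow> 'a \<Rightarrow> bool) \<Rightarrow> 'a \<Rightarrow> nat" where
  "degree V E v = card {u \<in> V. E v u}"

definition regular :: "'a set \<Rightarrow> ('a \<Rightarrow> 'a \<Rightarrow> bool) \<Rightarrow> nat \<Rightarrow> bool" where
  "regular V E d \<longleftrightarrow> (\<forall>v \<in> V. degree V E v = d)"

definition bipartite :: "'a set \<Rightarrow> ('a \<Rightarrow> 'a \<Rightarrow> bool) \<Rightarrow> bool" where
  "bipartite V E \<longleftrightarrow> (\<exists>A B. A \<union> B = V \<and> A \<inter> B = {} \<and>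
      (\<forall>u v. E u v \<longrightarrow> (u \<in> A \<and> v \<in> B) \<or> (u \<in> B \<and> v \<in> A)))"

definition is_cycle :: "('a \<Rightarrow> 'a \<Rightarrow> bool) \<Rightarrow> 'a list \<Rightarrow> bool" where
  "is_cycle E cs \<longleftrightarrow> length cs \<ge> 3 \<and> distinct cs \<and>
     (\<forall>i < length cs. E (cs ! i) (cs ! ((i + 1) mod length cs)))"

definition girth_at_least :: "('a \<Rightarrow> 'a \<Rightarrow> bool) \<Rightarrow> nat \<Rightarrow> bool" where
  "girth_at_least E g \<longleftrightarrow> (\<forall>cs. is_cycle E cs \<longrightarrow> length cs \<ge> g)"

definition injective_edge_coloring :: "('a \<Rightarrow> 'a \<Rightarrow> bool) \<Rightarrow> ('a set \<Rightarrow> nat) \<Rightarrow> bool" where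
  "injective_edge_coloring E c \<longleftrightarrow>
     (\<forall>e \<in> edges E. \<forall>f \<in> edges E. e \<noteq> f \<and>
        ((e \<inter> f = {} \<and> (\<exists>x \<in> e. \<exists>y \<in> f. E x y)) \<or>
         (\<exists>x y z. E x y \<and> E y z \<and> E x z \<and> e \<subseteq> {x, y, z} \<and> f \<subseteq> {x, y, z}))
        \<longrightarrow> c e \<noteq> c f)"

definition inj_chromatic_index :: "('a \<Rightarrow> 'a \<Rightarrow> bool) \<Rightarrow> nat" where
  "inj_chromatic_index E =
     (LEAST k. \<exists>c. injective_edge_coloring E c \<and> card (c ` edges E) \<le> k)"

end

theory Submission
  imports Defs
begin

(* Let c be an injective edge colouring of a Delta-regular triangle-free graph (V, E)
   and M the set of arcs of one colour, S the set of their endpoints. Two edges of the same colour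
   joined by an edge xy must both contain xy, so S spans no arcs besides M and M is a star forest,
   whence |M| + 2 <= 2|S|. Of the Delta |S| arcs leaving vertices of S, those not in M end in V - S,
   so Delta |S| <= |M| + Delta |V - S|. Together: Delta |M| + 2 Delta <= |M| + Delta |V|. Summing
   over the colours, with the sum of the |M| equal to Delta |V|, leaves at least Delta colours.

   Start from K_{Delta,Delta} and repeatedly pass to the cover on V x 2^E in which
   traversing an edge e toggles the membership of e in the second coordinate. It is again
   Delta-regular and bipartite, and its girth is larger: a cycle upstairs projects to a closed walk
   traversing every edge an even number of times, so it repeats a vertex, and its shortest
   repetition is a shorter cycle of the graph below. *)

lemma simple_graphD:
  assumes "simple_graph V E"
  shows "finite V" and "E u v \<Longrightarrow> u \<in> V" and "E u v \<Longrightarrow> v \<in> V"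
    and "E u v \<Longrightarrow> E v u" and "\<not> E v v"
  using assms by (auto simp: simple_graph_def)

lemma finite_edges:
  assumes "simple_graph V E"
  shows "finite (edges E)"
proof -
  have "edges E = (\<lambda>(u, v). {u, v}) ` {(u, v). E u v}"
    by (auto simp: edges_def)
  moreover have "{(u, v). E u v} \<subseteq> V \<times> V"
    using simple_graphD[OF assms] by auto
  ultimately show ?thesis
    using simple_graphD(1)[OF assms] by (metis finite_SigmaI finite_imageI finite_subset)
qed

lemma triangle_free_if_bipartite:
  assumes "bipartite V E" "E x y" "E y z" "E x z"
  shows False
  using assms unfolding bipartite_def by blast

lemma card_arcs_from_regular:
  assumes "simple_graph V E" "regular V E \<Delta>" "S \<subseteq> V"
  shows "card {(x, y). E x y \<and> x \<in> S} = \<Delta> * card S"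
proof -
  have "{(x, y). E x y \<and> x \<in> S} = Sigma S (\<lambda>x. {y \<in> V. E x y})"
    using simple_graphD(3)[OF assms(1)] by auto
  moreover have "finite S"
    using assms(1,3) finite_subset simple_graphD(1) by blast
  moreover have "card {y \<in> V. E x y} = \<Delta>" if "x \<in> S" for x
    using assms(2,3) that by (auto simp: regular_def degree_def)
  ultimately show ?thesis
    using simple_graphD(1)[OF assms(1)] by simp
qed

lemma regular_inner_arcs_bound:
  assumes sg: "simple_graph V E" and reg: "regular V E \<Delta>" and "S \<subseteq> V"
  shows "2 * \<Delta> * card S \<le> card {(x, y). E x y \<and> x \<in> S \<and> y \<in> S} + \<Delta> * card V"
proof -
  let ?inner = "{(x, y). E x y \<and> x \<in> S \<and> y \<in> S}"
  let ?out = "{(x, y). E x y \<and> x \<in> S \<and> y \<notin> S}"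
  have fin: "finite {(x, y). E x y}"
    using simple_graphD[OF sg] by (auto intro: finite_subset[of _ "V \<times> V"])
  have "{(x, y). E x y \<and> x \<in> S} = ?inner \<union> ?out"
    by auto
  hence "\<Delta> * card S = card (?inner \<union> ?out)"
    using card_arcs_from_regular[OF sg reg \<open>S \<subseteq> V\<close>] by simp
  also have "\<dots> = card ?inner + card ?out"
    by (rule card_Un_disjoint) (auto intro: finite_subset[OF _ fin])
  finally have split: "\<Delta> * card S = card ?inner + card ?out" .
  have "?out \<subseteq> prod.swap ` {(x, y). E x y \<and> x \<in> V - S}"
    using simple_graphD[OF sg] by auto
  hence "card ?out \<le> card (prod.swap ` {(x, y). E x y \<and> x \<in> V - S})"
    by (rule card_mono[rotated]) (auto intro: finite_subset[OF _ fin])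
  also have "\<dots> \<le> card {(x, y). E x y \<and> x \<in> V - S}"
    by (rule card_image_le) (auto intro: finite_subset[OF _ fin])
  also have "\<dots> = \<Delta> * card (V - S)"
    using card_arcs_from_regular[OF sg reg] by blast
  finally have "card ?out \<le> \<Delta> * card (V - S)" .
  moreover have "card (V - S) + card S = card V"
    using \<open>S \<subseteq> V\<close> simple_graphD(1)[OF sg] card_mono[of V S]
    by (simp add: card_Diff_subset finite_subset)
  hence "\<Delta> * card (V - S) + \<Delta> * card S = \<Delta> * card V"
    by (metis add_mult_distrib2)
  ultimately show ?thesis
    using split by simp
qed

lemma card_star_forest:
  assumes "finite D" "D \<noteq> {}" "sym D" "irrefl D"
    and star: "\<And>x y. (x, y) \<in> D \<Longrightarrow> D `` {x} = {y} \<or> D `` {y} = {x}"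
  shows "card D + 2 \<le> 2 * card (Domain D)"
proof -
  define L where "L = {x. \<exists>y. D `` {x} = {y}}"
  define p where "p x = the_elem (D `` {x})" for x
  have leaf: "x \<in> L \<and> y = p x" if "D `` {x} = {y}" for x y
    using that by (auto simp: L_def p_def)
  have arc_cases: "(x \<in> L \<and> y = p x) \<or> (y \<in> L \<and> x = p y)" if "(x, y) \<in> D" for x y
    using star[OF that] leaf by blast
  have "L \<subseteq> Domain D"
    by (auto simp: L_def)
  have fin: "finite (Domain D)"
    using assms(1) by (simp add: finite_Domain)
  obtain x y where xy: "(x, y) \<in> D"
    using assms(2) by auto
  show ?thesis
  proof (cases "L = Domain D")
    case True
    have "D \<subseteq> (\<lambda>x. (x, p x)) ` Domain D"
    proof
      fix a assume "a \<in> D"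
      then obtain u v where a: "a = (u, v)" and uv: "(u, v) \<in> D"
        by (cases a) auto
      then obtain w where "D `` {u} = {w}"
        using True by (auto simp: L_def)
      hence "v = p u"
        using leaf uv by blast
      thus "a \<in> (\<lambda>x. (x, p x)) ` Domain D"
        using a uv by blast
    qed
    hence "card D \<le> card (Domain D)"
      using fin by (meson card_image_le card_mono finite_imageI order_trans)
    moreover have "{x, y} \<subseteq> Domain D" "x \<noteq> y"
      using xy assms(3,4) by (auto dest: symD irreflD)
    hence "2 \<le> card (Domain D)"
      using fin by (metis card_2_iff card_mono)
    ultimately show ?thesis by linarith
  next
    case False
    have "D \<subseteq> (\<lambda>x. (x, p x)) ` L \<union> (\<lambda>x. (p x, x)) ` L"
      using arc_cases by fastforce
    hence "card D \<le> card ((\<lambda>x. (x, p x)) ` L) + card ((\<lambda>x. (p x, x)) ` L)"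
      using fin \<open>L \<subseteq> Domain D\<close>
      by (meson card_Un_le card_mono finite_UnI finite_imageI finite_subset order_trans)
    also have "\<dots> = 2 * card L"
      by (simp add: card_image inj_on_def)
    finally have "card D \<le> 2 * card L" .
    moreover have "card L < card (Domain D)"
      using False \<open>L \<subseteq> Domain D\<close> fin by (simp add: psubset_card_mono)
    ultimately show ?thesis by linarith
  qed
qed

definition color_arcs :: "('a \<Rightarrow> 'a \<Rightarrow> bool) \<Rightarrow> ('a set \<Rightarrow> nat) \<Rightarrow> nat \<Rightarrow> ('a \<times> 'a) set" where
  "color_arcs E c \<alpha> = {(x, y). E x y \<and> c {x, y} = \<alpha>}"

lemma injective_edge_coloringD:
  assumes "injective_edge_coloring E c" "E x u" "E y w" "E x y" "{x, u} \<inter> {y, w} = {}"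
  shows "c {x, u} \<noteq> c {y, w}"
proof -
  have "{x, u} \<in> edges E" "{y, w} \<in> edges E"
    using assms(2,3) by (auto simp: edges_def)
  moreover have "{x, u} \<noteq> {y, w}"
    using assms(5) by auto
  moreover have "\<exists>a\<in>{x, u}. \<exists>b\<in>{y, w}. E a b"
    using assms(4) by blast
  ultimately show ?thesis
    using assms(1,5) unfolding injective_edge_coloring_def by (metis (no_types, lifting))
qed

lemma sym_color_arcs:
  assumes "simple_graph V E"
  shows "sym (color_arcs E c \<alpha>)"
  using simple_graphD(4)[OF assms] by (auto intro: symI simp: color_arcs_def insert_commute)

lemma sum_card_color_arcs:
  assumes sg: "simple_graph V E" and reg: "regular V E \<Delta>"
  shows "(\<Sum>\<alpha>\<in>c ` edges E. card (color_arcs E c \<alpha>)) = \<Delta> * card V"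
proof -
  have arcs: "{(x, y). E x y \<and> x \<in> V} = (\<Union>\<alpha>\<in>c ` edges E. color_arcs E c \<alpha>)"
    using simple_graphD(2)[OF sg] by (auto simp: color_arcs_def edges_def)
  have "finite (color_arcs E c \<alpha>)" for \<alpha>
    using simple_graphD[OF sg]
    by (auto intro: finite_subset[of _ "V \<times> V"] simp: color_arcs_def)
  hence "card {(x, y). E x y \<and> x \<in> V} = (\<Sum>\<alpha>\<in>c ` edges E. card (color_arcs E c \<alpha>))"
    unfolding arcs using finite_edges[OF sg]
    by (intro card_UN_disjoint) (auto simp: color_arcs_def)
  thus ?thesis
    using card_arcs_from_regular[OF sg reg] by simp
qed

context
  fixes V :: "'a set" and E :: "'a \<Rightarrow> 'a \<Rightarrow> bool" and c :: "'a set \<Rightarrow> nat"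
  assumes sg: "simple_graph V E"
    and triangle_free: "\<And>x y z. E x y \<Longrightarrow> E y z \<Longrightarrow> E x z \<Longrightarrow> False"
    and ic: "injective_edge_coloring E c"
begin

lemma color_arcs_joined_share:
  assumes "(x, u) \<in> color_arcs E c \<alpha>" "(y, w) \<in> color_arcs E c \<alpha>" "E x y"
  shows "u = y \<or> w = x"
proof (rule ccontr)
  assume "\<not> (u = y \<or> w = x)"
  moreover have "x \<noteq> y"
    using assms(3) simple_graphD(5)[OF sg] by blast
  moreover have "u \<noteq> w"
    using assms triangle_free[of x y u] by (auto simp: color_arcs_def)
  ultimately have "{x, u} \<inter> {y, w} = {}"
    by auto
  hence "c {x, u} \<noteq> c {y, w}"
    using assms by (intro injective_edge_coloringD[OF ic]) (auto simp: color_arcs_def)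
  thus False
    using assms by (simp add: color_arcs_def)
qed

lemma color_arcs_induced:
  assumes "x \<in> Domain (color_arcs E c \<alpha>)" "y \<in> Domain (color_arcs E c \<alpha>)" "E x y"
  shows "(x, y) \<in> color_arcs E c \<alpha>"
proof -
  obtain u w where xu: "(x, u) \<in> color_arcs E c \<alpha>" and yw: "(y, w) \<in> color_arcs E c \<alpha>"
    using assms(1,2) by blast
  from color_arcs_joined_share[OF xu yw assms(3)] show ?thesis
  proof
    assume "u = y"
    thus ?thesis using xu by simp
  next
    assume "w = x"
    thus ?thesis using yw sym_color_arcs[OF sg, of c \<alpha>] by (blast dest: symD)
  qed
qed

lemma color_arcs_star:
  assumes "(x, y) \<in> color_arcs E c \<alpha>"
  shows "color_arcs E c \<alpha> `` {x} = {y} \<or> color_arcs E c \<alpha> `` {y} = {x}"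
proof (rule disjCI)
  assume "color_arcs E c \<alpha> `` {y} \<noteq> {x}"
  moreover have "(y, x) \<in> color_arcs E c \<alpha>"
    using assms sym_color_arcs[OF sg, of c \<alpha>] by (blast dest: symD)
  ultimately obtain w where yw: "(y, w) \<in> color_arcs E c \<alpha>" "w \<noteq> x"
    by blast
  have "E x y"
    using assms by (simp add: color_arcs_def)
  hence "u = y" if "(x, u) \<in> color_arcs E c \<alpha>" for u
    using color_arcs_joined_share[OF that yw(1)] yw(2) by blast
  thus "color_arcs E c \<alpha> `` {x} = {y}"
    using assms by blast
qed

lemma color_class_bound:
  assumes reg: "regular V E \<Delta>" and nonempty: "color_arcs E c \<alpha> \<noteq> {}"
  shows "\<Delta> * card (color_arcs E c \<alpha>) + 2 * \<Delta> \<le> card (color_arcs E c \<alpha>) + \<Delta> * card V"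
proof -
  let ?D = "color_arcs E c \<alpha>"
  let ?S = "Domain ?D"
  have "?D \<subseteq> V \<times> V"
    using simple_graphD[OF sg] by (auto simp: color_arcs_def)
  hence "finite ?D" "?S \<subseteq> V"
    using simple_graphD(1)[OF sg] by (auto intro: finite_subset)
  have "irrefl ?D"
    using simple_graphD(5)[OF sg] by (auto simp: irrefl_def color_arcs_def)
  have "(x, y) \<in> ?D \<longleftrightarrow> E x y \<and> x \<in> ?S \<and> y \<in> ?S" for x y
    using color_arcs_induced[of x \<alpha> y] sym_color_arcs[OF sg, of c \<alpha>]
    by (auto simp: color_arcs_def dest: symD)
  hence "{(x, y). E x y \<and> x \<in> ?S \<and> y \<in> ?S} = ?D"
    by auto
  hence "2 * \<Delta> * card ?S \<le> card ?D + \<Delta> * card V"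
    using regular_inner_arcs_bound[OF sg reg \<open>?S \<subseteq> V\<close>] by simp
  moreover have "card ?D + 2 \<le> 2 * card ?S"
    using card_star_forest[OF \<open>finite ?D\<close> nonempty sym_color_arcs[OF sg, of c \<alpha>]
        \<open>irrefl ?D\<close> color_arcs_star] .
  hence "\<Delta> * (card ?D + 2) \<le> \<Delta> * (2 * card ?S)"
    by (rule mult_le_mono2)
  ultimately show ?thesis
    by (simp add: algebra_simps)
qed

lemma injective_edge_coloring_card_ge:
  assumes reg: "regular V E \<Delta>" and "V \<noteq> {}"
  shows "\<Delta> \<le> card (c ` edges E)"
proof (cases "\<Delta> = 0")
  case False
  let ?C = "c ` edges E"
  have "finite ?C"
    using finite_edges[OF sg] by simp
  have sum_classes: "(\<Sum>\<alpha>\<in>?C. card (color_arcs E c \<alpha>)) = \<Delta> * card V"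
    by (rule sum_card_color_arcs[OF sg reg])
  have "?C \<noteq> {}"
    using sum_classes False \<open>V \<noteq> {}\<close> simple_graphD(1)[OF sg] by auto
  have "(\<Sum>\<alpha>\<in>?C. \<Delta> * card (color_arcs E c \<alpha>) + 2 * \<Delta>)
        \<le> (\<Sum>\<alpha>\<in>?C. card (color_arcs E c \<alpha>) + \<Delta> * card V)"
    by (intro sum_mono color_class_bound[OF reg]) (auto simp: color_arcs_def edges_def)
  hence total: "\<Delta> * (\<Delta> * card V) + card ?C * (2 * \<Delta>) \<le> \<Delta> * card V + card ?C * (\<Delta> * card V)"
    by (simp add: sum.distrib sum_distrib_left[symmetric] sum_classes)
  show ?thesis
  proof (rule ccontr)
    assume "\<not> \<Delta> \<le> card ?C"
    hence "(card ?C + 1) * (\<Delta> * card V) \<le> \<Delta> * (\<Delta> * card V)"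
      by (intro mult_le_mono1) simp
    hence "card ?C * (\<Delta> * card V) + \<Delta> * card V \<le> \<Delta> * (\<Delta> * card V)"
      by (simp add: distrib_right)
    hence "card ?C * (2 * \<Delta>) = 0"
      using total by linarith
    thus False
      using False \<open>?C \<noteq> {}\<close> \<open>finite ?C\<close> by simp
  qed
qed simp

end

lemma inj_chromatic_index_geI:
  assumes "finite (edges E)"
    and "\<And>c. injective_edge_coloring E c \<Longrightarrow> k \<le> card (c ` edges E)"
  shows "k \<le> inj_chromatic_index E"
proof -
  obtain f :: "'a set \<Rightarrow> nat" where "inj_on f (edges E)"
    using ex_bij_betw_finite_nat[OF assms(1)] bij_betw_imp_inj_on by blast
  hence "injective_edge_coloring E f"
    unfolding injective_edge_coloring_def by (simp add: inj_on_eq_iff)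
  hence "\<exists>k c. injective_edge_coloring E c \<and> card (c ` edges E) \<le> k"
    by blast
  hence "\<exists>c. injective_edge_coloring E c \<and> card (c ` edges E) \<le> inj_chromatic_index E"
    unfolding inj_chromatic_index_def by (rule LeastI_ex)
  thus ?thesis
    using assms(2) le_trans by blast
qed

lemma inj_chromatic_index_ge_degree:
  assumes sg: "simple_graph V E" and reg: "regular V E \<Delta>" and "V \<noteq> {}"
    and triangle_free: "\<And>x y z. E x y \<Longrightarrow> E y z \<Longrightarrow> E x z \<Longrightarrow> False"
  shows "\<Delta> \<le> inj_chromatic_index E"
  using finite_edges[OF sg] injective_edge_coloring_card_ge[OF sg triangle_free _ reg \<open>V \<noteq> {}\<close>]
  by (rule inj_chromatic_index_geI)

definition parity_cover_vertices :: "'a set \<Rightarrow> ('a \<Rightarrow> 'a \<Rightarrow> bool) \<Rightarrow> ('a \<times> 'a set set) set" where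
  "parity_cover_vertices V E = V \<times> Pow (edges E)"

definition parity_cover_adj ::
    "('a \<Rightarrow> 'a \<Rightarrow> bool) \<Rightarrow> 'a \<times> 'a set set \<Rightarrow> 'a \<times> 'a set set \<Rightarrow> bool" where
  "parity_cover_adj E p q \<longleftrightarrow> E (fst p) (fst q) \<and> snd p \<subseteq> edges E
     \<and> snd q = sym_diff (snd p) {{fst p, fst q}}"

lemma parity_cover_adj_edges:
  assumes "parity_cover_adj E p q"
  shows "snd q \<subseteq> edges E"
  using assms by (auto simp: parity_cover_adj_def edges_def)

lemma parity_cover_no_backtrack:
  assumes "parity_cover_adj E p q" "parity_cover_adj E q r" "fst r = fst p"
  shows "r = p"
  using assms by (auto simp: parity_cover_adj_def prod_eq_iff insert_commute)

lemma simple_graph_parity_cover: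
  assumes sg: "simple_graph V E"
  shows "simple_graph (parity_cover_vertices V E) (parity_cover_adj E)"
proof -
  have "finite (parity_cover_vertices V E)"
    using simple_graphD(1)[OF sg] finite_edges[OF sg] by (simp add: parity_cover_vertices_def)
  moreover have "p \<in> parity_cover_vertices V E \<and> q \<in> parity_cover_vertices V E"
    if "parity_cover_adj E p q" for p q
    using that parity_cover_adj_edges[OF that] simple_graphD(2,3)[OF sg]
    by (auto simp: parity_cover_vertices_def parity_cover_adj_def mem_Times_iff)
  moreover have "parity_cover_adj E q p" if "parity_cover_adj E p q" for p q
    using that parity_cover_adj_edges[OF that] simple_graphD(4)[OF sg]
    by (auto simp: parity_cover_adj_def insert_commute)
  moreover have "\<not> parity_cover_adj E p p" for p
    using simple_graphD(5)[OF sg] by (simp add: parity_cover_adj_def)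
  ultimately show ?thesis
    unfolding simple_graph_def by blast
qed

lemma regular_parity_cover:
  assumes sg: "simple_graph V E" and reg: "regular V E \<Delta>"
  shows "regular (parity_cover_vertices V E) (parity_cover_adj E) \<Delta>"
  unfolding regular_def degree_def
proof
  fix p assume p: "p \<in> parity_cover_vertices V E"
  obtain x s where p_eq: "p = (x, s)" and "x \<in> V" "s \<subseteq> edges E"
    using p by (auto simp: parity_cover_vertices_def)
  let ?lift = "\<lambda>u. (u, sym_diff s {{x, u}})"
  have "{q \<in> parity_cover_vertices V E. parity_cover_adj E p q} = ?lift ` {u \<in> V. E x u}"
    using simple_graph_parity_cover[OF sg] \<open>s \<subseteq> edges E\<close>
    by (fastforce simp: p_eq parity_cover_adj_def simple_graph_def parity_cover_vertices_def)
  moreover have "inj_on ?lift {u \<in> V. E x u}"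
    by (auto simp: inj_on_def)
  ultimately show "card {q \<in> parity_cover_vertices V E. parity_cover_adj E p q} = \<Delta>"
    using reg \<open>x \<in> V\<close> by (simp add: card_image regular_def degree_def)
qed

lemma bipartite_parity_cover:
  assumes "bipartite V E"
  shows "bipartite (parity_cover_vertices V E) (parity_cover_adj E)"
proof -
  obtain A B where "A \<union> B = V" "A \<inter> B = {}"
    and sides: "\<And>u v. E u v \<Longrightarrow> (u \<in> A \<and> v \<in> B) \<or> (u \<in> B \<and> v \<in> A)"
    using assms unfolding bipartite_def by blast
  hence "A \<times> Pow (edges E) \<union> B \<times> Pow (edges E) = parity_cover_vertices V E"
    "A \<times> Pow (edges E) \<inter> B \<times> Pow (edges E) = {}"
    by (auto simp: parity_cover_vertices_def)
  moreover have "(p \<in> A \<times> Pow (edges E) \<and> q \<in> B \<times> Pow (edges E))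
      \<or> (p \<in> B \<times> Pow (edges E) \<and> q \<in> A \<times> Pow (edges E))" if "parity_cover_adj E p q" for p q
    using that parity_cover_adj_edges[OF that] sides[of "fst p" "fst q"]
    by (auto simp: parity_cover_adj_def mem_Times_iff)
  ultimately show ?thesis
    unfolding bipartite_def by blast
qed

lemma parity_cover_cycle_projection_not_distinct:
  assumes cyc: "is_cycle (parity_cover_adj E) cs"
  shows "\<not> distinct (map fst cs)"
proof
  assume dist: "distinct (map fst cs)"
  define k where "k = length cs"
  define v where "v i = fst (cs ! i)" for i
  define s where "s i = snd (cs ! i)" for i
  have "3 \<le> k"
    using cyc by (simp add: is_cycle_def k_def)
  have v_inj: "i = j" if "i < k" "j < k" "v i = v j" for i j
    using nth_eq_iff_index_eq[OF dist, of i j] that by (simp add: v_def k_def)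
  have step: "s (Suc i mod k) = sym_diff (s i) {{v i, v (Suc i mod k)}}" if "i < k" for i
    using cyc that by (simp add: is_cycle_def parity_cover_adj_def k_def v_def s_def)
  \<comment> \<open>The edge \<open>{v 0, v 1}\<close> is traversed exactly once, so going around the cycle
      toggles its membership exactly once.\<close>
  define e0 where "e0 = {v 0, v 1}"
  have other_edges: "{v i, v (Suc i mod k)} \<noteq> e0" if "0 < i" "i < k" for i
  proof
    assume "{v i, v (Suc i mod k)} = e0"
    hence "v i = v 0 \<or> (v i = v 1 \<and> v (Suc i mod k) = v 0)"
      by (auto simp: e0_def doubleton_eq_iff)
    thus False
    proof
      assume "v i = v 0"
      thus False using v_inj[of i 0] that by simp
    next
      assume "v i = v 1 \<and> v (Suc i mod k) = v 0"
      moreover from this have "i = 1"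
        using v_inj[of i 1] that \<open>3 \<le> k\<close> by simp
      ultimately have "v 2 = v 0"
        using \<open>3 \<le> k\<close> by (simp add: numeral_2_eq_2)
      thus False
        using v_inj[of 2 0] \<open>3 \<le> k\<close> by simp
    qed
  qed
  have "e0 \<in> s (j mod k) \<longleftrightarrow> e0 \<in> s 1" if "1 \<le> j" "j \<le> k" for j
    using that
  proof (induction j)
    case (Suc j)
    show ?case
    proof (cases "j = 0")
      case False
      hence "e0 \<in> s j \<longleftrightarrow> e0 \<in> s 1"
        using Suc by simp
      thus ?thesis
        using step[of j] other_edges[of j] False Suc.prems by auto
    qed (use \<open>3 \<le> k\<close> in simp)
  qed simp
  from this[of k] have "e0 \<in> s 0 \<longleftrightarrow> e0 \<in> s 1"
    using \<open>3 \<le> k\<close> by simp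
  moreover have "s 1 = sym_diff (s 0) {e0}"
    using step[of 0] \<open>3 \<le> k\<close> by (simp add: e0_def)
  ultimately show False
    by auto
qed

lemma is_cycle_map_upt:
  assumes "3 \<le> d" "inj_on v {..<d}" "v d = v 0" "\<And>i. i < d \<Longrightarrow> E (v i) (v (Suc i))"
  shows "is_cycle E (map v [0..<d])"
  unfolding is_cycle_def
proof (intro conjI allI impI)
  show "3 \<le> length (map v [0..<d])"
    using assms(1) by simp
  show "distinct (map v [0..<d])"
    using assms(2) by (simp add: distinct_map lessThan_atLeast0)
  fix i assume "i < length (map v [0..<d])"
  hence "i < d" by simp
  show "E (map v [0..<d] ! i) (map v [0..<d] ! ((i + 1) mod length (map v [0..<d])))"
  proof (cases "Suc i < d")
    case True
    thus ?thesis using assms(4)[OF \<open>i < d\<close>] by simp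
  next
    case False
    hence "Suc i = d" using \<open>i < d\<close> by simp
    thus ?thesis using assms(3) assms(4)[OF \<open>i < d\<close>] by auto
  qed
qed

lemma walk_with_repeat_contains_cycle:
  assumes walk: "\<And>i. Suc i < k \<Longrightarrow> E (v i) (v (Suc i))"
    and repeat: "\<not> inj_on v {..<k}"
    and loopless: "\<And>x. \<not> E x x"
    and no_backtrack: "\<And>i. i + 2 < k \<Longrightarrow> v (i + 2) \<noteq> v i"
  shows "\<exists>cs. is_cycle E cs \<and> length cs < k"
proof -
  define repeats where "repeats d \<longleftrightarrow> 0 < d \<and> (\<exists>a. a + d < k \<and> v a = v (a + d))" for d
  have repeats_dist: "repeats (max i j - min i j)"
    if "i < k" "j < k" "i \<noteq> j" "v i = v j" for i j
    unfolding repeats_def using that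
    by (intro conjI exI[of _ "min i j"]) (auto simp: min_def max_def)
  obtain d where "repeats d" and minimal: "\<And>d'. d' < d \<Longrightarrow> \<not> repeats d'"
    using repeat repeats_dist exists_least_iff[of repeats] unfolding inj_on_def by blast
  then obtain a where "0 < d" "a + d < k" "v a = v (a + d)"
    unfolding repeats_def by blast
  have "inj_on (\<lambda>i. v (a + i)) {..<d}"
  proof (rule inj_onI, rule ccontr)
    fix i j assume "i \<in> {..<d}" "j \<in> {..<d}" "v (a + i) = v (a + j)" "i \<noteq> j"
    hence "repeats (max (a + i) (a + j) - min (a + i) (a + j))"
      using \<open>a + d < k\<close> by (intro repeats_dist) auto
    thus False
      using minimal \<open>i \<in> {..<d}\<close> \<open>j \<in> {..<d}\<close> by (simp add: less_imp_diff_less)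
  qed
  moreover have "d \<noteq> 1"
    using walk[of a] \<open>a + d < k\<close> \<open>v a = v (a + d)\<close> loopless by auto
  moreover have "d \<noteq> 2"
    using no_backtrack[of a] \<open>a + d < k\<close> \<open>v a = v (a + d)\<close> by auto
  ultimately have "is_cycle E (map (\<lambda>i. v (a + i)) [0..<d])"
    using \<open>0 < d\<close> \<open>a + d < k\<close> \<open>v a = v (a + d)\<close> walk by (intro is_cycle_map_upt) auto
  thus ?thesis
    using \<open>a + d < k\<close> by (intro exI[of _ "map (\<lambda>i. v (a + i)) [0..<d]"]) auto
qed

lemma girth_at_least_parity_cover:
  assumes sg: "simple_graph V E" and girth: "girth_at_least E g"
  shows "girth_at_least (parity_cover_adj E) (Suc g)"
  unfolding girth_at_least_def
proof (intro allI impI)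
  fix cs assume cyc: "is_cycle (parity_cover_adj E) cs"
  let ?k = "length cs"
  have adj: "parity_cover_adj E (cs ! i) (cs ! Suc i)" if "Suc i < ?k" for i
    using cyc that unfolding is_cycle_def by (metis Suc_eq_plus1 Suc_lessD mod_less)
  have "\<not> inj_on (\<lambda>i. fst (cs ! i)) {..<?k}"
    using parity_cover_cycle_projection_not_distinct[OF cyc]
    by (simp add: distinct_conv_nth inj_on_def) blast
  moreover have "fst (cs ! (i + 2)) \<noteq> fst (cs ! i)" if "i + 2 < ?k" for i
  proof
    assume "fst (cs ! (i + 2)) = fst (cs ! i)"
    hence "cs ! (i + 2) = cs ! i"
      using adj[of i] adj[of "Suc i"] that by (intro parity_cover_no_backtrack) auto
    thus False
      using cyc that by (simp add: is_cycle_def nth_eq_iff_index_eq)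
  qed
  ultimately obtain cs' where "is_cycle E cs'" "length cs' < ?k"
    using walk_with_repeat_contains_cycle[of ?k E "\<lambda>i. fst (cs ! i)"] adj simple_graphD(5)[OF sg]
    by (auto simp: parity_cover_adj_def)
  thus "Suc g \<le> ?k"
    using girth by (auto simp: girth_at_least_def)
qed

definition pullback_adj :: "('b \<Rightarrow> 'a) \<Rightarrow> 'b set \<Rightarrow> ('a \<Rightarrow> 'a \<Rightarrow> bool) \<Rightarrow> 'b \<Rightarrow> 'b \<Rightarrow> bool" where
  "pullback_adj h W E x y \<longleftrightarrow> x \<in> W \<and> y \<in> W \<and> E (h x) (h y)"

context
  fixes h :: "'b \<Rightarrow> 'a" and W :: "'b set" and V :: "'a set"
  assumes bij: "bij_betw h W V"
begin

lemma simple_graph_pullback: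
  assumes "simple_graph V E"
  shows "simple_graph W (pullback_adj h W E)"
  using assms bij_betw_finite[OF bij]
  by (auto simp: simple_graph_def pullback_adj_def)

lemma regular_pullback:
  assumes "regular V E \<Delta>"
  shows "regular W (pullback_adj h W E) \<Delta>"
  unfolding regular_def degree_def
proof
  fix x assume "x \<in> W"
  have "bij_betw h {y \<in> W. pullback_adj h W E x y} {u \<in> V. E (h x) u}"
    using bij \<open>x \<in> W\<close> unfolding pullback_adj_def bij_betw_def inj_on_def by auto
  thus "card {y \<in> W. pullback_adj h W E x y} = \<Delta>"
    using assms \<open>x \<in> W\<close> bij_betw_apply[OF bij] bij_betw_same_card
    by (fastforce simp: regular_def degree_def)
qed

lemma bipartite_pullback:
  assumes "bipartite V E"
  shows "bipartite W (pullback_adj h W E)"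
proof -
  obtain A B where "A \<union> B = V" "A \<inter> B = {}"
    and sides: "\<And>u v. E u v \<Longrightarrow> (u \<in> A \<and> v \<in> B) \<or> (u \<in> B \<and> v \<in> A)"
    using assms unfolding bipartite_def by blast
  hence "{x \<in> W. h x \<in> A} \<union> {x \<in> W. h x \<in> B} = W" "{x \<in> W. h x \<in> A} \<inter> {x \<in> W. h x \<in> B} = {}"
    using bij_betw_apply[OF bij] by auto
  moreover have "(x \<in> {x \<in> W. h x \<in> A} \<and> y \<in> {x \<in> W. h x \<in> B})
      \<or> (x \<in> {x \<in> W. h x \<in> B} \<and> y \<in> {x \<in> W. h x \<in> A})" if "pullback_adj h W E x y" for x y
    using that sides[of "h x" "h y"] by (auto simp: pullback_adj_def)
  ultimately show ?thesis
    unfolding bipartite_def by blast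
qed

lemma girth_at_least_pullback:
  assumes "girth_at_least E g"
  shows "girth_at_least (pullback_adj h W E) g"
  unfolding girth_at_least_def
proof (intro allI impI)
  fix cs assume cyc: "is_cycle (pullback_adj h W E) cs"
  have "set cs \<subseteq> W"
  proof
    fix x assume "x \<in> set cs"
    then obtain i where "i < length cs" "cs ! i = x"
      by (auto simp: in_set_conv_nth)
    thus "x \<in> W"
      using cyc by (auto simp: is_cycle_def pullback_adj_def)
  qed
  moreover have "0 < length cs"
    using cyc by (auto simp: is_cycle_def)
  ultimately have "is_cycle E (map h cs)"
    using cyc inj_on_subset[OF bij_betw_imp_inj_on[OF bij]]
    by (auto simp: is_cycle_def pullback_adj_def distinct_map)
  thus "g \<le> length cs"
    using assms by (auto simp: girth_at_least_def)
qed

end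

definition complete_bipartite :: "nat \<Rightarrow> nat \<Rightarrow> nat \<Rightarrow> bool" where
  "complete_bipartite n u v \<longleftrightarrow> u < 2 * n \<and> v < 2 * n \<and> (u < n \<longleftrightarrow> n \<le> v)"

lemma simple_graph_complete_bipartite: "simple_graph {..<2 * n} (complete_bipartite n)"
  by (auto simp: simple_graph_def complete_bipartite_def)

lemma regular_complete_bipartite: "regular {..<2 * n} (complete_bipartite n) n"
  unfolding regular_def degree_def
proof
  fix u assume "u \<in> {..<2 * n}"
  hence "{v \<in> {..<2 * n}. complete_bipartite n u v} = (if u < n then {n..<2 * n} else {..<n})"
    by (auto simp: complete_bipartite_def)
  thus "card {v \<in> {..<2 * n}. complete_bipartite n u v} = n"
    by simp
qed

lemma bipartite_complete_bipartite: "bipartite {..<2 * n} (complete_bipartite n)"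
  unfolding bipartite_def
  by (rule exI[of _ "{..<n}"], rule exI[of _ "{n..<2 * n}"]) (auto simp: complete_bipartite_def)

lemma exists_regular_bipartite_girth_at_least:
  assumes "0 < \<Delta>"
  shows "\<exists>(V :: nat set) E. simple_graph V E \<and> V \<noteq> {} \<and> regular V E \<Delta> \<and> bipartite V E
           \<and> girth_at_least E g"
proof (induction g)
  case 0
  show ?case
    using assms simple_graph_complete_bipartite regular_complete_bipartite
      bipartite_complete_bipartite
    by (intro exI[of _ "{..<2 * \<Delta>}"] exI[of _ "complete_bipartite \<Delta>"])
      (auto simp: girth_at_least_def lessThan_empty_iff)
next
  case (Suc g)
  then obtain V :: "nat set" and E
    where G: "simple_graph V E" "V \<noteq> {}" "regular V E \<Delta>" "bipartite V E" "girth_at_least E g"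
    by blast
  let ?W = "parity_cover_vertices V E"
  have "?W \<noteq> {}" and "finite ?W"
    using G(2) simple_graphD(1)[OF simple_graph_parity_cover[OF G(1)]]
    by (auto simp: parity_cover_vertices_def)
  then obtain h where h: "bij_betw h {..<card ?W} ?W"
    using ex_bij_betw_nat_finite lessThan_atLeast0 by metis
  have "{..<card ?W} \<noteq> {}"
    using \<open>?W \<noteq> {}\<close> \<open>finite ?W\<close> by (simp add: lessThan_empty_iff)
  thus ?case
    using simple_graph_pullback[OF h simple_graph_parity_cover[OF G(1)]]
      regular_pullback[OF h regular_parity_cover[OF G(1,3)]]
      bipartite_pullback[OF h bipartite_parity_cover[OF G(4)]]
      girth_at_least_pullback[OF h girth_at_least_parity_cover[OF G(1,5)]]
    by blast
qed

theorem proposition1p8: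
  fixes \<Delta> g :: nat
  assumes "\<Delta> \<ge> 3" and "g \<ge> 3"
  shows "\<exists>(V :: nat set) E. simple_graph V E \<and> regular V E \<Delta> \<and> bipartite V E
           \<and> girth_at_least E g \<and> inj_chromatic_index E \<ge> \<Delta>"
proof -
  obtain V :: "nat set" and E
    where G: "simple_graph V E" "V \<noteq> {}" "regular V E \<Delta>" "bipartite V E" "girth_at_least E g"
    using exists_regular_bipartite_girth_at_least[of \<Delta> g] \<open>\<Delta> \<ge> 3\<close> by auto
  moreover have "\<Delta> \<le> inj_chromatic_index E"
    using inj_chromatic_index_ge_degree[OF G(1,3,2)] triangle_free_if_bipartite[OF G(4)] by blast
  ultimately show ?thesis
    by blast
qed

end
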